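(* For every positive integer $n$, $$\sum_{k=0}^{n-1}\frac{q^{-k(k-1)/2}}{\genfrac{[}{]}{0pt}{}{n}{k}_q}=\frac{(q^2;q)_n}{(q^2;q^2)_n}\sum_{i=0}^{n-1}\frac{C(i)\,(q^2;q^2)_i}{(q^2;q)_i\,(q^{i+2}-1)},$$ where $$C(i)=\frac{q^{i+1}+q^{3(i+1)}+q^{-i(i-1)/2}+q^{-(i+1)(i-4)/2}-q^{(2+3i-i^2)/2}-q^{-(i+1)(i-2)/2}-2q^{2(i+1)}}{q^{i+1}-1}.$$ (The identity is an identity of rational functions in the indeterminate $q$.)
   Context: For an indeterminate $q$ and any $a$, $(a;q)_n=(1-a)(1-aq)\cdots(1-aq^{n-1})$, with $(a;q)_0=1$. The $q$-binomial coefficient is $\genfrac{[}{]}{0pt}{}{n}{k}_q=\frac{(q;q)_n}{(q;q)_k\,(q;q)_{n-k}}$ for $0\le k\le n$. *)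

theory Defs
  imports Complex_Main
begin

definition qpoch :: "'a::field \<Rightarrow> 'a \<Rightarrow> nat \<Rightarrow> 'a" where
  "qpoch a q n = (\<Prod>j<n. (1 - a * q ^ j))"

definition qbinom :: "nat \<Rightarrow> nat \<Rightarrow> 'a::field \<Rightarrow> 'a" where
  "qbinom n k q = qpoch q q n / (qpoch q q k * qpoch q q (n - k))"

text \<open>The coefficient C(i); all exponents below are integers (the numerators are even).\<close>
definition Ccoef :: "'a::field \<Rightarrow> nat \<Rightarrow> 'a" where
  "Ccoef q i = (let j = int i in
     (q ^ (i + 1) + q ^ (3 * (i + 1))
      + q powi (- (j * (j - 1) div 2))
      + q powi (- ((j + 1) * (j - 4) div 2))
      - q powi ((2 + 3 * j - j ^ 2) div 2)
      - q powi (- ((j + 1) * (j - 2) div 2))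
      - 2 * q ^ (2 * (i + 1)))
     / (q ^ (i + 1) - 1))"

end

theory Submission
  imports Defs
begin

text \<open>
  Write t(n,k) = q^(-k(k-1)/2) / [n k]_q and S(n) = \<Sum>_{k<n} t(n,k). The q-Pascal rule gives
  t(n+1,k) + q^(n+1) t(n+1,k+1) = t(n,k) (1 - q^(n+2)) / (1 - q^(n+1)), and summing over
  k \<le> n yields a first-order recurrence between S(n+1) and S(n). After multiplication by
  (q^2;q^2)_n / (q^2;q)_n it says that consecutive normalized sums differ exactly by the
  n-th summand of the right-hand side, so the identity follows by telescoping.
\<close>

lemma qpoch_0 [simp]: "qpoch a q 0 = 1"
  by (simp add: qpoch_def)

lemma qpoch_Suc: "qpoch a q (Suc n) = qpoch a q n * (1 - a * q ^ n)"
  by (simp add: qpoch_def)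

lemma qpoch_eq_0_iff: "qpoch a q n = 0 \<longleftrightarrow> (\<exists>j<n. a * q ^ j = 1)"
  by (auto simp: qpoch_def)

definition neg_tri_power :: "'a::field \<Rightarrow> nat \<Rightarrow> 'a" where
  "neg_tri_power q k = q powi (- (int k * (int k - 1) div 2))"

definition recip_qbinom_term :: "'a::field \<Rightarrow> nat \<Rightarrow> nat \<Rightarrow> 'a" where
  "recip_qbinom_term q n k = neg_tri_power q k / qbinom n k q"

definition recip_qbinom_sum :: "'a::field \<Rightarrow> nat \<Rightarrow> 'a" where
  "recip_qbinom_sum q n = (\<Sum>k<n. recip_qbinom_term q n k)"

lemma neg_tri_power_0 [simp]: "neg_tri_power q 0 = 1"
  by (simp add: neg_tri_power_def)

lemma neg_tri_power_Suc:
  assumes "q \<noteq> 0"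
  shows "neg_tri_power q (Suc k) = neg_tri_power q k / q ^ k"
proof -
  have "int (Suc k) * (int (Suc k) - 1) = int k * (int k - 1) + 2 * int k"
    by (simp add: algebra_simps)
  then have "- (int (Suc k) * (int (Suc k) - 1) div 2) = - (int k * (int k - 1) div 2) - int k"
    by simp
  then show ?thesis
    using assms by (simp add: neg_tri_power_def power_int_diff)
qed

lemma Ccoef_exponents:
  fixes j :: int
  shows "- ((j + 1) * (j - 4) div 2) = - (j * (j - 1) div 2) + 2 + j"
    and "(2 + 3 * j - j ^ 2) div 2 = - (j * (j - 1) div 2) + 1 + j"
    and "- ((j + 1) * (j - 2) div 2) = - (j * (j - 1) div 2) + 1"
proof -
  have "(j + 1) * (j - 4) = j * (j - 1) - 2 * (j + 2)"
    by (simp add: algebra_simps)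
  then show "- ((j + 1) * (j - 4) div 2) = - (j * (j - 1) div 2) + 2 + j"
    by simp
  have "2 + 3 * j - j ^ 2 = - (j * (j - 1)) + 2 * (j + 1)"
    by (simp add: algebra_simps power2_eq_square)
  moreover have "even (j * (j - 1))"
    by simp
  then obtain c where "j * (j - 1) = 2 * c"
    by (rule evenE)
  ultimately show "(2 + 3 * j - j ^ 2) div 2 = - (j * (j - 1) div 2) + 1 + j"
    by simp
  have "(j + 1) * (j - 2) = j * (j - 1) - 2"
    by (simp add: algebra_simps)
  then show "- ((j + 1) * (j - 2) div 2) = - (j * (j - 1) div 2) + 1"
    by simp
qed

lemma Ccoef_eq:
  fixes q :: "'a::field"
  assumes "q \<noteq> 0"
  shows "Ccoef q n =
    (q * q ^ n + q ^ 3 * (q ^ n) ^ 3 + neg_tri_power q n + neg_tri_power q n * q\<^sup>2 * q ^ n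
     - neg_tri_power q n * q * q ^ n - neg_tri_power q n * q - 2 * q\<^sup>2 * (q ^ n)\<^sup>2)
    / (q * q ^ n - 1)"
proof -
  have "q powi (a + 2 + int n) = q powi a * q\<^sup>2 * q ^ n" "q powi (a + 1 + int n) = q powi a * q * q ^ n"
       "q powi (a + 1) = q powi a * q" for a
    using assms by (simp_all add: power_int_add)
  moreover have "q ^ (n + 1) = q * q ^ n" "q ^ (3 * (n + 1)) = q ^ 3 * (q ^ n) ^ 3"
                "q ^ (2 * (n + 1)) = q\<^sup>2 * (q ^ n)\<^sup>2"
    by (simp_all flip: power_mult power_add) (simp_all add: algebra_simps)
  ultimately show ?thesis
    unfolding Ccoef_def Let_def Ccoef_exponents neg_tri_power_def
    by (simp only:) (simp add: mult_ac)
qed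

locale q_not_root_of_unity =
  fixes q :: "'a::field"
  assumes nonzero: "q \<noteq> 0"
    and power_ne_1: "\<forall>m::nat. m \<ge> 1 \<longrightarrow> q ^ m \<noteq> 1"
begin

lemma qpoch_powers_nonzero:
  assumes "m \<ge> 1"
  shows "qpoch (q ^ m) (q ^ l) n \<noteq> 0"
proof -
  have "q ^ m * (q ^ l) ^ j = q ^ (m + l * j)" for j
    by (simp add: power_add power_mult)
  then show ?thesis
    using assms power_ne_1 by (auto simp: qpoch_eq_0_iff)
qed

lemma one_minus_power_nonzero: "m \<ge> 1 \<Longrightarrow> 1 - q ^ m \<noteq> 0"
  using power_ne_1 by auto

lemma recip_qbinom_term_eq:
  "k \<le> n \<Longrightarrow> recip_qbinom_term q n k
     = neg_tri_power q k * qpoch q q k * qpoch q q (n - k) / qpoch q q n"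
  using qpoch_powers_nonzero[of 1 1] by (simp add: recip_qbinom_term_def qbinom_def field_simps)

lemma recip_qbinom_term_diag: "recip_qbinom_term q n n = neg_tri_power q n"
  using qpoch_powers_nonzero[of 1 1] by (simp add: recip_qbinom_term_eq)

lemma recip_qbinom_term_0: "recip_qbinom_term q n 0 = 1"
  using qpoch_powers_nonzero[of 1 1] by (simp add: recip_qbinom_term_eq)

lemma recip_qbinom_term_pascal:
  assumes "k \<le> n"
  shows "recip_qbinom_term q (Suc n) k + q ^ Suc n * recip_qbinom_term q (Suc n) (Suc k)
       = recip_qbinom_term q n k * (1 - q ^ (n + 2)) / (1 - q ^ (n + 1))"
proof -
  obtain m where n: "n = m + k"
    using assms le_iff_add by (metis add.commute)
  define a where "a = q ^ m"
  define b where "b = q ^ k"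
  define E where "E = neg_tri_power q k * qpoch q q k * qpoch q q m / qpoch q q n"
  have ab: "q ^ n = a * b" "q ^ Suc n = q * (a * b)" "q ^ (n + 1) = q * (a * b)"
           "q ^ (n + 2) = q * q * (a * b)"
    by (simp_all add: a_def b_def n power_add mult_ac power2_eq_square)
  define c where "c = 1 - q * (a * b)"
  have "b \<noteq> 0"
    using nonzero by (simp add: b_def)
  have "recip_qbinom_term q (Suc n) k = E * (1 - q * a) / c"
    using recip_qbinom_term_eq[of k "Suc n"] assms
    by (simp add: E_def c_def n a_def b_def qpoch_Suc Suc_diff_le power_add)
  moreover have "recip_qbinom_term q (Suc n) (Suc k) = E / b * (1 - q * b) / c"
    using recip_qbinom_term_eq[of "Suc k" "Suc n"] assms
    by (simp add: E_def c_def n a_def b_def qpoch_Suc neg_tri_power_Suc[OF nonzero] power_add mult_ac)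
  moreover have "q * (a * b) * (E / b * (1 - q * b) / c) = E * (q * a * (1 - q * b)) / c"
    using \<open>b \<noteq> 0\<close> by simp
  moreover have "(1 - q * a) + q * a * (1 - q * b) = 1 - q * q * (a * b)"
    by (simp add: algebra_simps)
  moreover have "recip_qbinom_term q n k = E"
    using recip_qbinom_term_eq[of k n] by (simp add: E_def n)
  ultimately show ?thesis
    unfolding ab c_def by (simp add: add_divide_distrib[symmetric] distrib_left[symmetric])
qed

lemma recip_qbinom_sum_rec:
  "recip_qbinom_sum q (Suc n)
     + q ^ Suc n * (recip_qbinom_sum q (Suc n) + neg_tri_power q (Suc n) - 1)
   = (recip_qbinom_sum q n + neg_tri_power q n) * (1 - q ^ (n + 2)) / (1 - q ^ (n + 1))"
proof -
  let ?t = "recip_qbinom_term q" and ?S = "recip_qbinom_sum q"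
  have full: "(\<Sum>k\<le>m. ?t m k) = ?S m + neg_tri_power q m" for m
    by (simp add: recip_qbinom_sum_def recip_qbinom_term_diag flip: lessThan_Suc_atMost)
  have shifted: "(\<Sum>k\<le>n. ?t (Suc n) (Suc k)) = ?S (Suc n) + neg_tri_power q (Suc n) - 1"
    using sum.atMost_Suc_shift[of "?t (Suc n)" n] full[of "Suc n"]
    by (simp add: recip_qbinom_term_0 algebra_simps)
  have "?S (Suc n) + q ^ Suc n * (?S (Suc n) + neg_tri_power q (Suc n) - 1)
      = (\<Sum>k\<le>n. ?t (Suc n) k + q ^ Suc n * ?t (Suc n) (Suc k))"
    unfolding shifted[symmetric] by (simp add: recip_qbinom_sum_def lessThan_Suc_atMost sum.distrib
        sum_distrib_left)
  also have "\<dots> = (\<Sum>k\<le>n. ?t n k * (1 - q ^ (n + 2)) / (1 - q ^ (n + 1)))"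
    by (intro sum.cong refl recip_qbinom_term_pascal) simp
  also have "\<dots> = (?S n + neg_tri_power q n) * (1 - q ^ (n + 2)) / (1 - q ^ (n + 1))"
    by (simp flip: full sum_distrib_right sum_divide_distrib)
  finally show ?thesis .
qed

lemma recip_qbinom_sum_Suc:
  fixes n :: nat
  defines "x \<equiv> q ^ n" and "p \<equiv> neg_tri_power q n"
  shows "(1 - q\<^sup>2 * x\<^sup>2) / (1 - q\<^sup>2 * x) * recip_qbinom_sum q (Suc n)
       = recip_qbinom_sum q n + p - q * (1 - q * x) * (p - x) / (1 - q\<^sup>2 * x)"
proof -
  let ?S = "recip_qbinom_sum q"
  have x: "x \<noteq> 0"
    using nonzero by (simp add: x_def)
  have "1 - q ^ (n + 1) \<noteq> 0" "1 - q ^ (n + 2) \<noteq> 0"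
    by (rule one_minus_power_nonzero, simp)+
  then have nz: "1 - q * x \<noteq> 0" "1 - q\<^sup>2 * x \<noteq> 0"
    by (simp_all add: x_def power_add power2_eq_square mult_ac)
  have "?S (Suc n) + q * x * (?S (Suc n) + p / x - 1) = (?S n + p) * (1 - q\<^sup>2 * x) / (1 - q * x)"
    using recip_qbinom_sum_rec[of n]
    by (simp add: x_def p_def neg_tri_power_Suc[OF nonzero] power_add power2_eq_square mult_ac)
  then have "(1 + q * x) * ?S (Suc n) = (?S n + p) * (1 - q\<^sup>2 * x) / (1 - q * x) - q * (p - x)"
    using x by (simp add: algebra_simps)
  moreover have "(1 - q\<^sup>2 * x\<^sup>2) / (1 - q\<^sup>2 * x) * ?S (Suc n)
      = (1 - q * x) / (1 - q\<^sup>2 * x) * ((1 + q * x) * ?S (Suc n))"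
    by (simp add: algebra_simps power2_eq_square)
  ultimately show ?thesis
    using nz by (simp add: field_simps)
qed

lemma Ccoef_div:
  fixes n :: nat
  defines "x \<equiv> q ^ n" and "p \<equiv> neg_tri_power q n"
  shows "Ccoef q n / (q ^ (n + 2) - 1) = p - q * (1 - q * x) * (p - x) / (1 - q\<^sup>2 * x)"
proof -
  have "1 - q ^ (n + 1) \<noteq> 0" "1 - q ^ (n + 2) \<noteq> 0"
    by (rule one_minus_power_nonzero, simp)+
  then have "q * x - 1 \<noteq> 0" "q\<^sup>2 * x - 1 \<noteq> 0" "1 - q\<^sup>2 * x \<noteq> 0"
    by (auto simp: x_def power_add power2_eq_square mult_ac)
  moreover have "q ^ (n + 2) = q\<^sup>2 * x"
    by (simp add: x_def power_add power2_eq_square mult_ac)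
  ultimately show ?thesis
    unfolding Ccoef_eq[OF nonzero] x_def[symmetric] p_def[symmetric] \<open>q ^ (n + 2) = q\<^sup>2 * x\<close>
    by (simp add: divide_simps) (simp add: algebra_simps power2_eq_square power3_eq_cube)
qed

lemma normalized_recip_qbinom_sum_Suc:
  "qpoch (q\<^sup>2) (q\<^sup>2) (Suc n) / qpoch (q\<^sup>2) q (Suc n) * recip_qbinom_sum q (Suc n)
   = qpoch (q\<^sup>2) (q\<^sup>2) n / qpoch (q\<^sup>2) q n * recip_qbinom_sum q n
     + Ccoef q n * qpoch (q\<^sup>2) (q\<^sup>2) n / (qpoch (q\<^sup>2) q n * (q ^ (n + 2) - 1))"
proof -
  let ?D = "qpoch (q\<^sup>2) (q\<^sup>2)" and ?B = "qpoch (q\<^sup>2) q" and ?S = "recip_qbinom_sum q"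
  have "(q\<^sup>2) ^ n = (q ^ n)\<^sup>2"
    by (metis power_mult mult.commute)
  then have "?D (Suc n) / ?B (Suc n) = ?D n / ?B n * ((1 - q\<^sup>2 * (q ^ n)\<^sup>2) / (1 - q\<^sup>2 * q ^ n))"
    by (simp add: qpoch_Suc)
  then have "?D (Suc n) / ?B (Suc n) * ?S (Suc n)
      = ?D n / ?B n * ((1 - q\<^sup>2 * (q ^ n)\<^sup>2) / (1 - q\<^sup>2 * q ^ n) * ?S (Suc n))"
    by simp
  also have "(1 - q\<^sup>2 * (q ^ n)\<^sup>2) / (1 - q\<^sup>2 * q ^ n) * ?S (Suc n) = ?S n + Ccoef q n / (q ^ (n + 2) - 1)"
    unfolding recip_qbinom_sum_Suc Ccoef_div by simp
  finally show ?thesis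
    by (simp add: distrib_left)
qed

lemma normalized_recip_qbinom_sum:
  "qpoch (q\<^sup>2) (q\<^sup>2) n / qpoch (q\<^sup>2) q n * recip_qbinom_sum q n
   = (\<Sum>i<n. Ccoef q i * qpoch (q\<^sup>2) (q\<^sup>2) i / (qpoch (q\<^sup>2) q i * (q ^ (i + 2) - 1)))"
proof (induction n)
  case 0
  show ?case
    by (simp add: recip_qbinom_sum_def)
next
  case (Suc n)
  show ?case
    unfolding normalized_recip_qbinom_sum_Suc Suc.IH by simp
qed

end

theorem theorem2:
  fixes q :: "'a::field" and n :: nat
  assumes "q \<noteq> 0" and "\<forall>m::nat. m \<ge> 1 \<longrightarrow> q ^ m \<noteq> 1" and "n \<ge> 1"
  shows "(\<Sum>k<n. q powi (- (int k * (int k - 1) div 2)) / qbinom n k q)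
       = qpoch (q^2) q n / qpoch (q^2) (q^2) n *
         (\<Sum>i<n. Ccoef q i * qpoch (q^2) (q^2) i / (qpoch (q^2) q i * (q ^ (i + 2) - 1)))"
proof -
  interpret q_not_root_of_unity q
    using assms(1,2) by unfold_locales
  have "qpoch (q^2) q n \<noteq> 0" "qpoch (q^2) (q^2) n \<noteq> 0"
    using qpoch_powers_nonzero[of 2 1 n] qpoch_powers_nonzero[of 2 2 n] by simp_all
  then have "recip_qbinom_sum q n = qpoch (q^2) q n / qpoch (q^2) (q^2) n
      * (qpoch (q^2) (q^2) n / qpoch (q^2) q n * recip_qbinom_sum q n)"
    by simp
  then show ?thesis
    unfolding normalized_recip_qbinom_sum
    by (simp add: recip_qbinom_sum_def recip_qbinom_term_def neg_tri_power_def)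
qed

end
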